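(* The DODOSP restricted to instances with $r_l^d=0$ and $r_u^d=N$ for each day $d$ can be decided in time polynomial in $D$.
   Context: An instance of the Days On Days Off Scheduling Problem (DODOSP) consists of integers $D\ge 1$ (days), $N\ge 1$ (workers), bounds $l_w,u_w,l_o,u_o,U_w,U_o\in\mathbb{N}$, and for each day $d\in\{1,\dots,D\}$ integers $0\le r_l^d\le r_u^d\le N$. A schedule is a map $f:\{n_1,\dots,n_N\}\times\{1,\dots,D\}\to\{\mathrm{ON},\mathrm{OFF}\}$ (not cyclic). A work period (resp. off period) of a worker is an inclusion-wise maximal set of consecutive days on which the worker is ON (resp. OFF). A schedule is feasible if on every day $d$ the number of workers that are ON lies in $[r_l^d,r_u^d]$, every work period has length between $l_w$ and $u_w$, every off period has length between $l_o$ and $u_o$, every worker is ON on at most $U_w$ days and OFF on at most $U_o$ days. The decision problem asks whether a feasible schedule exists. *)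

theory Defs
  imports Main
begin

text \<open>Workers are indexed by 0..N-1, days by 1..D. A schedule is
  f :: nat => nat => bool, where f i d = True means worker i is ON on day d.\<close>

definition consec_days :: "nat \<Rightarrow> nat set \<Rightarrow> bool" where
  "consec_days D S \<longleftrightarrow> (\<exists>a b. 1 \<le> a \<and> a \<le> b \<and> b \<le> D \<and> S = {a..b})"

definition period :: "nat \<Rightarrow> (nat \<Rightarrow> bool) \<Rightarrow> nat set \<Rightarrow> bool" where
  "period D p S \<longleftrightarrow> consec_days D S \<and> (\<forall>d\<in>S. p d) \<and>
     (\<forall>T. consec_days D T \<and> S \<subseteq> T \<and> (\<forall>d\<in>T. p d) \<longrightarrow> T = S)"

definition work_period :: "nat \<Rightarrow> (nat \<Rightarrow> nat \<Rightarrow> bool) \<Rightarrow> nat \<Rightarrow> nat set \<Rightarrow> bool" where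
  "work_period D f i S \<longleftrightarrow> period D (\<lambda>d. f i d) S"

definition off_period :: "nat \<Rightarrow> (nat \<Rightarrow> nat \<Rightarrow> bool) \<Rightarrow> nat \<Rightarrow> nat set \<Rightarrow> bool" where
  "off_period D f i S \<longleftrightarrow> period D (\<lambda>d. \<not> f i d) S"

definition feasible_schedule ::
  "nat \<Rightarrow> nat \<Rightarrow> nat \<Rightarrow> nat \<Rightarrow> nat \<Rightarrow> nat \<Rightarrow> nat \<Rightarrow> nat \<Rightarrow>
   (nat \<Rightarrow> nat) \<Rightarrow> (nat \<Rightarrow> nat) \<Rightarrow> (nat \<Rightarrow> nat \<Rightarrow> bool) \<Rightarrow> bool" where
  "feasible_schedule D N lw uw lo uo Uw Uo rl ru f \<longleftrightarrow>
     (\<forall>d\<in>{1..D}. rl d \<le> card {i. i < N \<and> f i d} \<and> card {i. i < N \<and> f i d} \<le> ru d) \<and>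
     (\<forall>i<N. \<forall>S. work_period D f i S \<longrightarrow> lw \<le> card S \<and> card S \<le> uw) \<and>
     (\<forall>i<N. \<forall>S. off_period D f i S \<longrightarrow> lo \<le> card S \<and> card S \<le> uo) \<and>
     (\<forall>i<N. card {d\<in>{1..D}. f i d} \<le> Uw) \<and>
     (\<forall>i<N. card {d\<in>{1..D}. \<not> f i d} \<le> Uo)"

definition dodosp_yes ::
  "nat \<Rightarrow> nat \<Rightarrow> nat \<Rightarrow> nat \<Rightarrow> nat \<Rightarrow> nat \<Rightarrow> nat \<Rightarrow> nat \<Rightarrow>
   (nat \<Rightarrow> nat) \<Rightarrow> (nat \<Rightarrow> nat) \<Rightarrow> bool" where
  "dodosp_yes D N lw uw lo uo Uw Uo rl ru \<longleftrightarrow>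
     (\<exists>f. feasible_schedule D N lw uw lo uo Uw Uo rl ru f)"

type_synonym state = "nat \<Rightarrow> nat"

datatype aexp = Const nat | Mem aexp | Plus aexp aexp | Minus aexp aexp
datatype bexp = Less aexp aexp | Not bexp | And bexp bexp
datatype com = Skip | Store aexp aexp | Seq com com | If bexp com com | While bexp com

fun aval :: "aexp \<Rightarrow> state \<Rightarrow> nat" where
  "aval (Const n) s = n"
| "aval (Mem a) s = s (aval a s)"
| "aval (Plus a b) s = aval a s + aval b s"
| "aval (Minus a b) s = aval a s - aval b s"

fun bval :: "bexp \<Rightarrow> state \<Rightarrow> bool" where
  "bval (Less a b) s = (aval a s < aval b s)"
| "bval (Not b) s = (\<not> bval b s)"
| "bval (And b c) s = (bval b s \<and> bval c s)"

inductive big_step :: "com \<Rightarrow> state \<Rightarrow> nat \<Rightarrow> state \<Rightarrow> bool" where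
  Skip: "big_step Skip s 1 s"
| Store: "big_step (Store a b) s 1 (s(aval a s := aval b s))"
| Seq: "big_step c1 s t1 s2 \<Longrightarrow> big_step c2 s2 t2 s3 \<Longrightarrow> big_step (Seq c1 c2) s (t1 + t2) s3"
| IfT: "bval b s \<Longrightarrow> big_step c1 s t s' \<Longrightarrow> big_step (If b c1 c2) s (Suc t) s'"
| IfF: "\<not> bval b s \<Longrightarrow> big_step c2 s t s' \<Longrightarrow> big_step (If b c1 c2) s (Suc t) s'"
| WhileF: "\<not> bval b s \<Longrightarrow> big_step (While b c) s 1 s"
| WhileT: "bval b s \<Longrightarrow> big_step c s t1 s2 \<Longrightarrow> big_step (While b c) s2 t2 s3 \<Longrightarrow>
           big_step (While b c) s (Suc (t1 + t2)) s3"

definition input_state ::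
  "nat \<Rightarrow> nat \<Rightarrow> nat \<Rightarrow> nat \<Rightarrow> nat \<Rightarrow> nat \<Rightarrow> nat \<Rightarrow> nat \<Rightarrow>
   (nat \<Rightarrow> nat) \<Rightarrow> (nat \<Rightarrow> nat) \<Rightarrow> state" where
  "input_state D N lw uw lo uo Uw Uo rl ru = (\<lambda>a.
     if a < 8 then [D, N, lw, uw, lo, uo, Uw, Uo] ! a
     else if a < 8 + 2 * D then
       (if even (a - 8) then rl ((a - 8) div 2 + 1) else ru ((a - 8) div 2 + 1))
     else 0)"

end

theory Submission
  imports Defs
begin

text \<open>With daily demand bounds 0 and N the workers do not interact, so all of them may follow
  one admissible ON/OFF pattern, and any worker's pattern is admissible. A pattern on days
  1..D is an alternating sequence of work and off blocks; hence one exists iff there are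
  numbers k and m of work and off blocks with |k - m| \<le> 1 and a number W of work days such
  that W splits into k admissible work blocks, D - W into m admissible off blocks, W \<le> Uw and
  D - W \<le> Uo. For fixed k and m the admissible W form an interval, and k \<le> D, so the
  question reduces to 3(D + 1) emptiness tests of intervals, which a RAM loop performs in
  12 D + 24 steps.\<close>

text \<open>X can be written as a sum of k block lengths between max l 1 and u (blocks are nonempty).\<close>
definition splittable :: "nat \<Rightarrow> nat \<Rightarrow> nat \<Rightarrow> nat \<Rightarrow> bool" where
  "splittable k l u X \<longleftrightarrow> k * max l 1 \<le> X \<and> X \<le> k * u"

lemma splittable_0 [simp]: "splittable 0 l u X \<longleftrightarrow> X = 0"
  by (simp add: splittable_def)

lemma splittable_SucI:
  "max l 1 \<le> L \<Longrightarrow> L \<le> u \<Longrightarrow> splittable k l u X \<Longrightarrow> splittable (Suc k) l u (L + X)"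
  by (auto simp: splittable_def max_def)

lemma splittable_SucE:
  assumes "splittable (Suc k) l u X"
  obtains L where "max l 1 \<le> L" "L \<le> u" "L \<le> X" "splittable k l u (X - L)"
proof
  have "Suc k * max l 1 \<le> Suc k * u" using assms by (simp add: splittable_def)
  then have "max l 1 \<le> u" by (simp only: Suc_mult_le_cancel1)
  then have "k * max l 1 \<le> k * u" by (rule mult_le_mono2)
  then show "max l 1 \<le> min u (X - k * max l 1)" "min u (X - k * max l 1) \<le> u"
    "min u (X - k * max l 1) \<le> X" "splittable k l u (X - min u (X - k * max l 1))"
    using assms \<open>max l 1 \<le> u\<close> by (auto simp: splittable_def min_def)
qed

section \<open>Runs of a pattern\<close>

definition maximal_run :: "nat \<Rightarrow> nat \<Rightarrow> (nat \<Rightarrow> bool) \<Rightarrow> bool \<Rightarrow> nat \<Rightarrow> nat \<Rightarrow> bool" where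
  "maximal_run a D p v c e \<longleftrightarrow> a \<le> c \<and> c \<le> e \<and> e \<le> D \<and> (\<forall>d\<in>{c..e}. p d = v) \<and>
     (c = a \<or> p (c - 1) \<noteq> v) \<and> (e = D \<or> p (Suc e) \<noteq> v)"

definition runs_bounded :: "nat \<Rightarrow> nat \<Rightarrow> (nat \<Rightarrow> bool) \<Rightarrow> (bool \<Rightarrow> nat) \<Rightarrow> (bool \<Rightarrow> nat) \<Rightarrow> bool" where
  "runs_bounded a D p lb ub \<longleftrightarrow>
     (\<forall>v c e. maximal_run a D p v c e \<longrightarrow> lb v \<le> Suc e - c \<and> Suc e - c \<le> ub v)"

definition count_days :: "nat \<Rightarrow> nat \<Rightarrow> (nat \<Rightarrow> bool) \<Rightarrow> bool \<Rightarrow> nat" where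
  "count_days a D p v = card {d\<in>{a..D}. p d = v}"

lemma count_days_complement: "count_days a D p v + count_days a D p (\<not> v) = Suc D - a"
proof -
  have "card {a..D} = card ({d\<in>{a..D}. p d = v} \<union> {d\<in>{a..D}. p d = (\<not> v)})"
    by (rule arg_cong[where f = card]) auto
  also have "\<dots> = count_days a D p v + count_days a D p (\<not> v)"
    unfolding count_days_def by (rule card_Un_disjoint) auto
  finally show ?thesis by simp
qed

lemma count_days_True_False: "count_days 1 D p True + count_days 1 D p False = D"
  using count_days_complement[of 1 D p True] by simp

lemma count_days_const_prefix:
  assumes "\<forall>d\<in>{a..b}. p d = v" "a \<le> Suc b" "b \<le> D"
  shows "count_days a D p w = (if w = v then Suc b - a else 0) + count_days (Suc b) D p w"
proof -
  have "{d\<in>{a..D}. p d = w} = {d\<in>{a..b}. p d = w} \<union> {d\<in>{Suc b..D}. p d = w}"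
    using assms(2,3) by auto
  then have "count_days a D p w = card {d\<in>{a..b}. p d = w} + count_days (Suc b) D p w"
    unfolding count_days_def by (simp add: card_Un_disjoint disjoint_iff)
  moreover have "{d\<in>{a..b}. p d = w} = (if w = v then {a..b} else {})"
    using assms(1) by auto
  ultimately show ?thesis by simp
qed

lemma count_days_cong: "\<forall>d\<in>{a..D}. p d = q d \<Longrightarrow> count_days a D p v = count_days a D q v"
  unfolding count_days_def by (metis (mono_tags, lifting) Collect_cong)

lemma run_end_exists:
  "a \<le> D \<Longrightarrow> p a = v \<Longrightarrow>
    \<exists>b. a \<le> b \<and> b \<le> D \<and> (\<forall>d\<in>{a..b}. p d = v) \<and> (b = D \<or> p (Suc b) \<noteq> v)"
proof (induction "D - a" arbitrary: a)
  case 0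
  then show ?case by (intro exI[of _ a]) simp
next
  case (Suc n)
  show ?case
  proof (cases "p (Suc a) = v")
    case True
    have "n = D - Suc a" "Suc a \<le> D" using Suc.hyps(2) by simp_all
    then obtain b where b: "Suc a \<le> b" "b \<le> D" "\<forall>d\<in>{Suc a..b}. p d = v" "b = D \<or> p (Suc b) \<noteq> v"
      using Suc.hyps(1) True by blast
    have "\<forall>d\<in>{a..b}. p d = v"
    proof
      fix d assume "d \<in> {a..b}"
      then have "d = a \<or> d \<in> {Suc a..b}" by auto
      then show "p d = v" using b(3) Suc.prems(2) by blast
    qed
    with b show ?thesis by (metis Suc_leD)
  next
    case False
    then show ?thesis using Suc.prems by (intro exI[of _ a]) simp
  qed
qed

lemma runs_bounded_suffix:
  assumes "runs_bounded a D p lb ub" "a \<le> b" "p (Suc b) \<noteq> p b"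
  shows "runs_bounded (Suc b) D p lb ub"
  unfolding runs_bounded_def
proof (intro allI impI)
  fix v c e
  assume run: "maximal_run (Suc b) D p v c e"
  then have "p c = v" by (simp add: maximal_run_def)
  with run assms(2,3) have "maximal_run a D p v c e"
    unfolding maximal_run_def by (metis diff_Suc_1 le_SucI order_trans)
  then show "lb v \<le> Suc e - c \<and> Suc e - c \<le> ub v"
    using assms(1) by (simp add: runs_bounded_def)
qed

lemma runs_bounded_const:
  "lb v \<le> Suc D - a \<Longrightarrow> Suc D - a \<le> ub v \<Longrightarrow> runs_bounded a D (\<lambda>_. v) lb ub"
  unfolding runs_bounded_def maximal_run_def by force

lemma runs_bounded_prepend_block:
  assumes q: "runs_bounded (a + L) D q lb ub" "q (a + L) \<noteq> v"
    and L: "0 < L" "a + L \<le> Suc D" "lb v \<le> L" "L \<le> ub v"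
  shows "runs_bounded a D (\<lambda>d. if d < a + L then v else q d) lb ub"
  unfolding runs_bounded_def
proof (intro allI impI)
  fix w c e
  define p where "p = (\<lambda>d. if d < a + L then v else q d)"
  assume "maximal_run a D (\<lambda>d. if d < a + L then v else q d) w c e"
  then have run: "a \<le> c" "c \<le> e" "e \<le> D" "\<forall>d\<in>{c..e}. p d = w"
    "c = a \<or> p (c - 1) \<noteq> w" "e = D \<or> p (Suc e) \<noteq> w"
    unfolding maximal_run_def p_def by blast+
  show "lb w \<le> Suc e - c \<and> Suc e - c \<le> ub w"
  proof (cases "c < a + L")
    case True
    moreover have "p c = w" using run(2,4) by simp
    ultimately have "w = v" by (simp add: p_def)
    have "c - 1 < a + L" using True by arith
    then have "c = a" using run(5) \<open>w = v\<close> by (auto simp: p_def)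
    moreover have "e < a + L"
    proof (rule ccontr)
      assume "\<not> e < a + L"
      then have "p (a + L) = w" using run(4) True by simp
      then show False using q(2) \<open>w = v\<close> by (simp add: p_def)
    qed
    moreover have "\<not> Suc e < a + L"
    proof
      assume "Suc e < a + L"
      then have "e = D" using run(6) \<open>w = v\<close> by (simp add: p_def)
      then show False using \<open>Suc e < a + L\<close> L(2) by simp
    qed
    ultimately have "Suc e - c = L" by linarith
    then show ?thesis using \<open>w = v\<close> L by simp
  next
    case False
    have "maximal_run (a + L) D q w c e"
      unfolding maximal_run_def using False run L(1) by (auto simp: p_def split: if_splits)
    then show ?thesis using q(1) by (simp add: runs_bounded_def)
  qed
qed

lemma splittable_counts_of_runs_bounded:
  assumes "a \<le> D" "runs_bounded a D p lb ub" "p a = v"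
  shows "\<exists>k1 k2. 0 < k1 \<and> k2 \<le> k1 \<and> k1 \<le> Suc k2 \<and>
    splittable k1 (lb v) (ub v) (count_days a D p v) \<and>
    splittable k2 (lb (\<not> v)) (ub (\<not> v)) (count_days a D p (\<not> v))"
  using assms
proof (induction "D - a" arbitrary: a v rule: less_induct)
  case less
  obtain b where b: "a \<le> b" "b \<le> D" "\<forall>d\<in>{a..b}. p d = v" "b = D \<or> p (Suc b) \<noteq> v"
    using run_end_exists[of a D p v] less.prems(1,3) by blast
  have "maximal_run a D p v a b" using b by (simp add: maximal_run_def)
  then have len: "max (lb v) 1 \<le> Suc b - a" "Suc b - a \<le> ub v"
    using less.prems(2) b(1) by (auto simp: runs_bounded_def)
  have count: "count_days a D p w = (if w = v then Suc b - a else 0) + count_days (Suc b) D p w"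
    for w using count_days_const_prefix[OF b(3)] b(1,2) by simp
  show ?case
  proof (cases "b = D")
    case True
    then have "count_days (Suc b) D p w = 0" for w by (simp add: count_days_def)
    then show ?thesis using count len by (intro exI[of _ 1] exI[of _ 0]) (simp add: splittable_def)
  next
    case False
    then have "b < D" and flip: "p (Suc b) = (\<not> v)" using b(2,4) by auto
    moreover have "p b = v" using b(1,3) by simp
    ultimately have suffix: "runs_bounded (Suc b) D p lb ub"
      using runs_bounded_suffix[OF less.prems(2) b(1)] by simp
    have closer: "D - Suc b < D - a" "Suc b \<le> D" using \<open>b < D\<close> b(1) by auto
    have "\<exists>k1 k2. 0 < k1 \<and> k2 \<le> k1 \<and> k1 \<le> Suc k2 \<and>
      splittable k1 (lb (\<not> v)) (ub (\<not> v)) (count_days (Suc b) D p (\<not> v)) \<and>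
      splittable k2 (lb (\<not> \<not> v)) (ub (\<not> \<not> v)) (count_days (Suc b) D p (\<not> \<not> v))"
      by (rule less.hyps[OF closer suffix flip])
    then obtain k1 k2 where k: "0 < k1" "k2 \<le> k1" "k1 \<le> Suc k2"
      "splittable k1 (lb (\<not> v)) (ub (\<not> v)) (count_days (Suc b) D p (\<not> v))"
      "splittable k2 (lb v) (ub v) (count_days (Suc b) D p v)"
      unfolding not_not by blast
    have "splittable (Suc k2) (lb v) (ub v) (count_days a D p v)"
      using splittable_SucI[OF len k(5)] count by simp
    then show ?thesis using k count by (intro exI[of _ "Suc k2"] exI[of _ k1]) auto
  qed
qed

lemma runs_bounded_of_splittable_counts:
  assumes "0 < k1" "k2 \<le> k1" "k1 \<le> Suc k2" "X + Y = Suc D - a"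
    "splittable k1 (lb v) (ub v) X" "splittable k2 (lb (\<not> v)) (ub (\<not> v)) Y"
  shows "\<exists>p. p a = v \<and> runs_bounded a D p lb ub \<and> count_days a D p v = X"
  using assms
proof (induction "k1 + k2" arbitrary: a v k1 k2 X Y rule: less_induct)
  case less
  show ?case
  proof (cases "k2 = 0")
    case True
    then have "k1 = 1" "Y = 0" using less.prems(1,3,6) by auto
    then have "X = Suc D - a" "lb v \<le> X" "X \<le> ub v"
      using less.prems(4,5) by (auto simp: splittable_def)
    moreover have "count_days a D (\<lambda>_. v) v = card {a..D}"
      unfolding count_days_def by (rule arg_cong[where f = card]) blast
    ultimately show ?thesis using runs_bounded_const by (auto intro!: exI[of _ "\<lambda>_. v"])
  next
    case False
    obtain K where K: "k1 = Suc K" using less.prems(1) by (cases k1) auto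
    then obtain L where L: "max (lb v) 1 \<le> L" "L \<le> ub v" "L \<le> X" "splittable K (lb v) (ub v) (X - L)"
      using splittable_SucE less.prems(5) by metis
    have "\<exists>q. q (a + L) = (\<not> v) \<and> runs_bounded (a + L) D q lb ub \<and> count_days (a + L) D q (\<not> v) = Y"
      using less.hyps[of k2 K Y "X - L" "a + L" "\<not> v"] less.prems(2-6) K L False by auto
    then obtain q where q: "q (a + L) = (\<not> v)" "runs_bounded (a + L) D q lb ub"
      "count_days (a + L) D q (\<not> v) = Y"
      by blast
    define p where "p = (\<lambda>d. if d < a + L then v else q d)"
    have "runs_bounded a D p lb ub"
      unfolding p_def using q(1,2) L less.prems(4) by (intro runs_bounded_prepend_block) auto
    have "\<forall>d\<in>{a..a + L - 1}. p d = v" "a + L - 1 \<le> D"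
      using L(1,3) less.prems(4) by (auto simp: p_def)
    then have "count_days a D p v = L + count_days (a + L) D p v"
      using count_days_const_prefix[of a "a + L - 1" p v D v] L(1) by simp
    also have "count_days (a + L) D p v = count_days (a + L) D q v"
      by (rule count_days_cong) (simp add: p_def)
    also have "\<dots> = X - L"
      using count_days_complement[of "a + L" D q v] q(3) less.prems(4) by simp
    finally have "count_days a D p v = X" using L(3) by simp
    moreover have "p a = v" using L(1) by (simp add: p_def)
    ultimately show ?thesis using \<open>runs_bounded a D p lb ub\<close> by blast
  qed
qed

section \<open>Reduction to block counts\<close>

lemma consec_days_intervalI: "1 \<le> c \<Longrightarrow> c \<le> e \<Longrightarrow> e \<le> D \<Longrightarrow> consec_days D {c..e}"
  unfolding consec_days_def by blast

lemma maximal_run_of_period: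
  assumes S: "period D (\<lambda>d. p d = v) S"
  shows "\<exists>c e. S = {c..e} \<and> maximal_run 1 D p v c e"
proof -
  from S obtain c e where ce: "1 \<le> c" "c \<le> e" "e \<le> D" "S = {c..e}"
    and const: "\<forall>d\<in>{c..e}. p d = v"
    unfolding period_def consec_days_def by blast
  have maximal: "T = S" if "consec_days D T" "S \<subseteq> T" "\<forall>d\<in>T. p d = v" for T
    using S that unfolding period_def by blast
  have "c = 1 \<or> p (c - 1) \<noteq> v"
  proof (rule ccontr)
    assume extend: "\<not> ?thesis"
    have "\<forall>d\<in>{c - 1..e}. p d = v"
    proof
      fix d assume "d \<in> {c - 1..e}"
      then have "d = c - 1 \<or> d \<in> {c..e}" by auto
      then show "p d = v" using const extend by blast
    qed
    then have "{c - 1..e} = S"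
      using ce extend by (intro maximal consec_days_intervalI) auto
    then show False using ce extend by auto
  qed
  moreover have "e = D \<or> p (Suc e) \<noteq> v"
  proof (rule ccontr)
    assume extend: "\<not> ?thesis"
    have "\<forall>d\<in>{c..Suc e}. p d = v"
    proof
      fix d assume "d \<in> {c..Suc e}"
      then have "d = Suc e \<or> d \<in> {c..e}" by auto
      then show "p d = v" using const extend by blast
    qed
    then have "{c..Suc e} = S"
      using ce extend by (intro maximal consec_days_intervalI) auto
    then show False using ce by auto
  qed
  ultimately show ?thesis
    using ce const unfolding maximal_run_def by blast
qed

lemma period_of_maximal_run:
  assumes "maximal_run 1 D p v c e"
  shows "period D (\<lambda>d. p d = v) {c..e}"
proof -
  from assms have run: "1 \<le> c" "c \<le> e" "e \<le> D"
    "\<forall>d\<in>{c..e}. p d = v" "c = 1 \<or> p (c - 1) \<noteq> v" "e = D \<or> p (Suc e) \<noteq> v"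
    unfolding maximal_run_def by blast+
  have "T = {c..e}" if T: "consec_days D T" "{c..e} \<subseteq> T" "\<forall>d\<in>T. p d = v" for T
  proof -
    obtain c' e' where T': "1 \<le> c'" "e' \<le> D" "T = {c'..e'}"
      using T(1) unfolding consec_days_def by blast
    have "c' \<le> c" "e \<le> e'" using T(2) T'(3) run(2) by auto
    moreover have "\<not> c' < c"
    proof
      assume "c' < c"
      then have "c - 1 \<in> T" "c \<noteq> 1" using T'(1,3) \<open>e \<le> e'\<close> run(2) by auto
      then show False using run(5) T(3) by blast
    qed
    moreover have "\<not> e < e'"
    proof
      assume "e < e'"
      then have "Suc e \<in> T" "e \<noteq> D" using T'(2,3) \<open>c' \<le> c\<close> run(2) by auto
      then show False using run(6) T(3) by blast
    qed
    ultimately show "T = {c..e}" using T'(3) by simp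
  qed
  moreover have "consec_days D {c..e}" using run(1-3) by (rule consec_days_intervalI)
  ultimately show ?thesis
    unfolding period_def using run(4) by auto
qed

lemma period_iff_maximal_run:
  "period D (\<lambda>d. p d = v) S \<longleftrightarrow> (\<exists>c e. S = {c..e} \<and> maximal_run 1 D p v c e)"
proof
  assume "\<exists>c e. S = {c..e} \<and> maximal_run 1 D p v c e"
  then show "period D (\<lambda>d. p d = v) S" using period_of_maximal_run by auto
qed (rule maximal_run_of_period)

lemma period_lengths_iff_maximal_runs:
  "(\<forall>S. period D (\<lambda>d. p d = v) S \<longrightarrow> l \<le> card S \<and> card S \<le> u) \<longleftrightarrow>
    (\<forall>c e. maximal_run 1 D p v c e \<longrightarrow> l \<le> Suc e - c \<and> Suc e - c \<le> u)"
  unfolding period_iff_maximal_run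
proof (intro iffI allI impI)
  fix c e
  assume "\<forall>S. (\<exists>c e. S = {c..e} \<and> maximal_run 1 D p v c e) \<longrightarrow> l \<le> card S \<and> card S \<le> u"
    and "maximal_run 1 D p v c e"
  then show "l \<le> Suc e - c \<and> Suc e - c \<le> u"
    by (metis card_atLeastAtMost)
qed auto

definition admissible_pattern ::
  "nat \<Rightarrow> nat \<Rightarrow> nat \<Rightarrow> nat \<Rightarrow> nat \<Rightarrow> nat \<Rightarrow> nat \<Rightarrow> (nat \<Rightarrow> bool) \<Rightarrow> bool" where
  "admissible_pattern D lw uw lo uo Uw Uo p \<longleftrightarrow>
     (\<forall>S. period D p S \<longrightarrow> lw \<le> card S \<and> card S \<le> uw) \<and>
     (\<forall>S. period D (\<lambda>d. \<not> p d) S \<longrightarrow> lo \<le> card S \<and> card S \<le> uo) \<and>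
     card {d\<in>{1..D}. p d} \<le> Uw \<and> card {d\<in>{1..D}. \<not> p d} \<le> Uo"

lemma dodosp_yes_iff_admissible_pattern:
  assumes "1 \<le> N" "\<forall>d\<in>{1..D}. rl d = 0 \<and> ru d = N"
  shows "dodosp_yes D N lw uw lo uo Uw Uo rl ru \<longleftrightarrow> (\<exists>p. admissible_pattern D lw uw lo uo Uw Uo p)"
proof
  assume "dodosp_yes D N lw uw lo uo Uw Uo rl ru"
  then obtain f where "feasible_schedule D N lw uw lo uo Uw Uo rl ru f"
    unfolding dodosp_yes_def by blast
  then have "admissible_pattern D lw uw lo uo Uw Uo (f 0)"
    using \<open>1 \<le> N\<close> unfolding feasible_schedule_def admissible_pattern_def work_period_def off_period_def
    by (simp add: Suc_le_eq)
  then show "\<exists>p. admissible_pattern D lw uw lo uo Uw Uo p" by blast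
next
  assume "\<exists>p. admissible_pattern D lw uw lo uo Uw Uo p"
  then obtain p where "admissible_pattern D lw uw lo uo Uw Uo p" ..
  moreover have "card {i. i < N \<and> p d} \<le> N" for d
    by (rule order_trans[OF card_mono[of "{..<N}"]]) auto
  ultimately have "feasible_schedule D N lw uw lo uo Uw Uo rl ru (\<lambda>i d. p d)"
    using assms(2) unfolding feasible_schedule_def admissible_pattern_def work_period_def off_period_def
    by auto
  then show "dodosp_yes D N lw uw lo uo Uw Uo rl ru" unfolding dodosp_yes_def by blast
qed

lemma admissible_pattern_iff_runs_bounded:
  "admissible_pattern D lw uw lo uo Uw Uo p \<longleftrightarrow>
     runs_bounded 1 D p (\<lambda>v. if v then lw else lo) (\<lambda>v. if v then uw else uo) \<and>
     count_days 1 D p True \<le> Uw \<and> count_days 1 D p False \<le> Uo"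
  using period_lengths_iff_maximal_runs[of D p True lw uw]
    period_lengths_iff_maximal_runs[of D p False lo uo]
  unfolding admissible_pattern_def runs_bounded_def count_days_def
  by (auto simp: all_bool_eq)

definition block_layout ::
  "nat \<Rightarrow> nat \<Rightarrow> nat \<Rightarrow> nat \<Rightarrow> nat \<Rightarrow> nat \<Rightarrow> nat \<Rightarrow> nat \<Rightarrow> nat \<Rightarrow> nat \<Rightarrow> bool" where
  "block_layout D lw uw lo uo Uw Uo k m W \<longleftrightarrow> k \<le> Suc m \<and> m \<le> Suc k \<and>
     splittable k lw uw W \<and> splittable m lo uo (D - W) \<and> W \<le> D \<and> W \<le> Uw \<and> D - W \<le> Uo"

lemma block_layout_of_admissible_pattern:
  assumes "1 \<le> D" "admissible_pattern D lw uw lo uo Uw Uo p"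
  shows "\<exists>k m W. block_layout D lw uw lo uo Uw Uo k m W"
proof -
  define lb :: "bool \<Rightarrow> nat" where "lb = (\<lambda>v. if v then lw else lo)"
  define ub :: "bool \<Rightarrow> nat" where "ub = (\<lambda>v. if v then uw else uo)"
  have p: "runs_bounded 1 D p lb ub" "count_days 1 D p True \<le> Uw" "count_days 1 D p False \<le> Uo"
    using assms(2) unfolding admissible_pattern_iff_runs_bounded lb_def ub_def by blast+
  define W where "W = count_days 1 D p True"
  have off: "count_days 1 D p False = D - W" "W \<le> D"
    using count_days_True_False[of D p] by (simp_all add: W_def)
  obtain k1 k2 where k: "0 < k1" "k2 \<le> k1" "k1 \<le> Suc k2"
    "splittable k1 (lb (p 1)) (ub (p 1)) (count_days 1 D p (p 1))"
    "splittable k2 (lb (\<not> p 1)) (ub (\<not> p 1)) (count_days 1 D p (\<not> p 1))"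
    using splittable_counts_of_runs_bounded[OF assms(1) p(1) refl] by blast
  show ?thesis
  proof (cases "p 1")
    case True
    then have "block_layout D lw uw lo uo Uw Uo k1 k2 W"
      using k p off by (simp add: block_layout_def lb_def ub_def W_def)
    then show ?thesis by blast
  next
    case False
    then have "block_layout D lw uw lo uo Uw Uo k2 k1 W"
      using k p off by (simp add: block_layout_def lb_def ub_def W_def)
    then show ?thesis by blast
  qed
qed

lemma admissible_pattern_of_block_layout:
  assumes "1 \<le> D" "block_layout D lw uw lo uo Uw Uo k m W"
  shows "\<exists>p. admissible_pattern D lw uw lo uo Uw Uo p"
proof -
  define lb :: "bool \<Rightarrow> nat" where "lb = (\<lambda>v. if v then lw else lo)"
  define ub :: "bool \<Rightarrow> nat" where "ub = (\<lambda>v. if v then uw else uo)"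
  note layout = assms(2)[unfolded block_layout_def]
  have "\<exists>p. runs_bounded 1 D p lb ub \<and> count_days 1 D p True = W"
  proof (cases "m \<le> k")
    case True
    moreover have "0 < k"
    proof (rule ccontr)
      assume "\<not> 0 < k"
      then have "W = 0" "D - W = 0" using True layout by (simp_all add: splittable_def)
      then show False using assms(1) by simp
    qed
    ultimately show ?thesis
      using runs_bounded_of_splittable_counts[of k m W "D - W" D 1 lb True ub] layout
      by (auto simp: lb_def ub_def)
  next
    case False
    then obtain p where "runs_bounded 1 D p lb ub" "count_days 1 D p False = D - W"
      using runs_bounded_of_splittable_counts[of m k "D - W" W D 1 lb False ub] layout
      by (auto simp: lb_def ub_def)
    moreover have "count_days 1 D p True = W"
      using count_days_True_False[of D p] calculation(2) layout by linarith
    ultimately show ?thesis by blast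
  qed
  then show ?thesis
    using count_days_True_False layout
    unfolding admissible_pattern_iff_runs_bounded lb_def ub_def by (metis add_diff_cancel_left')
qed

section \<open>An interval test for each number of blocks\<close>

text \<open>The admissible numbers W of work days form the interval from max A (D - Y) (D - Uo) to
  min B (D - X) Uw D; the definition says that it is nonempty.\<close>
definition work_total_feasible :: "nat \<Rightarrow> nat \<Rightarrow> nat \<Rightarrow> nat \<Rightarrow> nat \<Rightarrow> nat \<Rightarrow> nat \<Rightarrow> bool" where
  "work_total_feasible D A B X Y Uw Uo \<longleftrightarrow> X \<le> D \<and>
     A \<le> B \<and> A \<le> D - X \<and> A \<le> Uw \<and> A \<le> D \<and>
     D - Y \<le> B \<and> D - Y \<le> D - X \<and> D - Y \<le> Uw \<and>
     D - Uo \<le> B \<and> D - Uo \<le> D - X \<and> D - Uo \<le> Uw"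

lemma work_total_feasible_iff:
  "work_total_feasible D A B X Y Uw Uo \<longleftrightarrow>
    (\<exists>W. A \<le> W \<and> W \<le> B \<and> X \<le> D - W \<and> D - W \<le> Y \<and> W \<le> D \<and> W \<le> Uw \<and> D - W \<le> Uo)"
proof
  assume feasible: "work_total_feasible D A B X Y Uw Uo"
  define W where "W = max A (max (D - Y) (D - Uo))"
  have "A \<le> W" "D - Y \<le> W" "D - Uo \<le> W" by (simp_all add: W_def)
  moreover have "W \<le> B" "W \<le> D - X" "W \<le> Uw" "W \<le> D" "X \<le> D"
    using feasible by (simp_all add: W_def work_total_feasible_def)
  ultimately show "\<exists>W. A \<le> W \<and> W \<le> B \<and> X \<le> D - W \<and> D - W \<le> Y \<and> W \<le> D \<and> W \<le> Uw \<and> D - W \<le> Uo"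
    by (intro exI[of _ W]) arith
qed (auto simp: work_total_feasible_def)

definition blocks_test :: "nat \<Rightarrow> nat \<Rightarrow> nat \<Rightarrow> nat \<Rightarrow> nat \<Rightarrow> nat \<Rightarrow> nat \<Rightarrow> nat \<Rightarrow> nat \<Rightarrow> bool" where
  "blocks_test D lw uw lo uo Uw Uo k m \<longleftrightarrow>
     work_total_feasible D (k * max lw 1) (k * uw) (m * max lo 1) (m * uo) Uw Uo"

lemma blocks_test_iff:
  "blocks_test D lw uw lo uo Uw Uo k m \<longleftrightarrow>
    (\<exists>W. splittable k lw uw W \<and> splittable m lo uo (D - W) \<and> W \<le> D \<and> W \<le> Uw \<and> D - W \<le> Uo)"
  unfolding blocks_test_def work_total_feasible_iff splittable_def by blast

definition block_count_test :: "nat \<Rightarrow> nat \<Rightarrow> nat \<Rightarrow> nat \<Rightarrow> nat \<Rightarrow> nat \<Rightarrow> nat \<Rightarrow> nat \<Rightarrow> bool" where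
  "block_count_test D lw uw lo uo Uw Uo k \<longleftrightarrow>
     blocks_test D lw uw lo uo Uw Uo k (k - 1) \<or> blocks_test D lw uw lo uo Uw Uo k k \<or>
     blocks_test D lw uw lo uo Uw Uo k (Suc k)"

lemma block_count_test_iff_block_layout:
  "block_count_test D lw uw lo uo Uw Uo k \<longleftrightarrow> (\<exists>m W. block_layout D lw uw lo uo Uw Uo k m W)"
proof
  assume "block_count_test D lw uw lo uo Uw Uo k"
  then obtain m where "m = k - 1 \<or> m = k \<or> m = Suc k" "blocks_test D lw uw lo uo Uw Uo k m"
    unfolding block_count_test_def by blast
  moreover from this(1) have "k \<le> Suc m" "m \<le> Suc k" by arith+
  ultimately show "\<exists>m W. block_layout D lw uw lo uo Uw Uo k m W"
    unfolding blocks_test_iff block_layout_def by blast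
next
  assume "\<exists>m W. block_layout D lw uw lo uo Uw Uo k m W"
  then obtain m W where layout: "block_layout D lw uw lo uo Uw Uo k m W" by blast
  then have "m = k - 1 \<or> m = k \<or> m = Suc k"
    unfolding block_layout_def by arith
  moreover have "blocks_test D lw uw lo uo Uw Uo k m"
    using layout unfolding block_layout_def blocks_test_iff by blast
  ultimately show "block_count_test D lw uw lo uo Uw Uo k"
    unfolding block_count_test_def by blast
qed

lemma block_layout_le: "block_layout D lw uw lo uo Uw Uo k m W \<Longrightarrow> k \<le> D"
proof -
  assume "block_layout D lw uw lo uo Uw Uo k m W"
  moreover have "k \<le> k * max lw 1" by simp
  ultimately show "k \<le> D" unfolding block_layout_def splittable_def by linarith
qed

lemma dodosp_yes_iff_block_count_test:
  assumes "1 \<le> D" "1 \<le> N" "\<forall>d\<in>{1..D}. rl d = 0 \<and> ru d = N"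
  shows "dodosp_yes D N lw uw lo uo Uw Uo rl ru \<longleftrightarrow> (\<exists>k\<le>D. block_count_test D lw uw lo uo Uw Uo k)"
proof -
  have "dodosp_yes D N lw uw lo uo Uw Uo rl ru \<longleftrightarrow> (\<exists>p. admissible_pattern D lw uw lo uo Uw Uo p)"
    using assms(2,3) by (rule dodosp_yes_iff_admissible_pattern)
  also have "\<dots> \<longleftrightarrow> (\<exists>k m W. block_layout D lw uw lo uo Uw Uo k m W)"
    using block_layout_of_admissible_pattern[OF assms(1)] admissible_pattern_of_block_layout[OF assms(1)]
    by blast
  also have "\<dots> \<longleftrightarrow> (\<exists>k\<le>D. block_count_test D lw uw lo uo Uw Uo k)"
    unfolding block_count_test_iff_block_layout using block_layout_le by blast
  finally show ?thesis .
qed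

section \<open>The RAM program\<close>

abbreviation cell :: "nat \<Rightarrow> aexp" where
  "cell n \<equiv> Mem (Const n)"

definition le_bexp :: "aexp \<Rightarrow> aexp \<Rightarrow> bexp" where
  "le_bexp x y = Not (Less y x)"

definition fits_bexp :: "aexp \<Rightarrow> aexp \<Rightarrow> bexp" where
  "fits_bexp x y =
    And (le_bexp x (cell 0))
    (And (le_bexp (cell 9) (cell 10)) (And (le_bexp (cell 9) (Minus (cell 0) x))
    (And (le_bexp (cell 9) (cell 6)) (And (le_bexp (cell 9) (cell 0))
    (And (le_bexp (Minus (cell 0) y) (cell 10)) (And (le_bexp (Minus (cell 0) y) (Minus (cell 0) x))
    (And (le_bexp (Minus (cell 0) y) (cell 6))
    (And (le_bexp (Minus (cell 0) (cell 7)) (cell 10))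
    (And (le_bexp (Minus (cell 0) (cell 7)) (Minus (cell 0) x))
    (le_bexp (Minus (cell 0) (cell 7)) (cell 6)))))))))))"

lemma bval_fits_bexp [simp]:
  "bval (fits_bexp x y) s = work_total_feasible (s 0) (s 9) (s 10) (aval x s) (aval y s) (s 6) (s 7)"
  by (simp add: fits_bexp_def le_bexp_def work_total_feasible_def not_less)

lemma big_step_Store_Const: "big_step (Store (Const a) e) s 1 (s(a := aval e s))"
  using big_step.Store[of "Const a" e s] by simp

definition set_flag_if :: "bexp \<Rightarrow> com" where
  "set_flag_if b = If b (Store (Const 13) (Const 1)) Skip"

lemma big_step_set_flag_if: "big_step (set_flag_if b) s 2 (s(13 := if bval b s then 1 else s 13))"
proof (cases "bval b s")
  case True
  have "big_step (Store (Const 13) (Const 1)) s 1 (s(13 := 1))"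
    using big_step.Store[of "Const 13" "Const 1" s] by simp
  then show ?thesis using big_step.IfT[OF True] True by (simp add: set_flag_if_def numeral_2_eq_2)
next
  case False
  then show ?thesis using big_step.IfF[OF False big_step.Skip]
    by (simp add: set_flag_if_def numeral_2_eq_2)
qed

definition max1_store :: "nat \<Rightarrow> nat \<Rightarrow> com" where
  "max1_store a c = If (Less (cell a) (Const 1)) (Store (Const c) (Const 1)) (Store (Const c) (cell a))"

lemma big_step_max1_store: "big_step (max1_store a c) s 2 (s(c := max (s a) 1))"
proof (cases "s a < 1")
  case True
  then have "big_step (max1_store a c) s (Suc 1) (s(c := aval (Const 1) s))"
    unfolding max1_store_def by (intro big_step.IfT big_step_Store_Const) simp
  then show ?thesis using True by (simp add: numeral_2_eq_2)
next
  case False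
  then have "big_step (max1_store a c) s (Suc 1) (s(c := aval (cell a) s))"
    unfolding max1_store_def by (intro big_step.IfF big_step_Store_Const) simp
  moreover have "max (s a) 1 = s a" using False by simp
  ultimately show ?thesis by (simp add: numeral_2_eq_2)
qed

lemma big_step_While_counting:
  assumes step: "\<And>k s. k < n \<Longrightarrow> I k s \<Longrightarrow> bval b s \<and> (\<exists>s'. big_step c s t s' \<and> I (Suc k) s')"
    and stop: "\<And>s. I n s \<Longrightarrow> \<not> bval b s"
  shows "k \<le> n \<Longrightarrow> I k s \<Longrightarrow> \<exists>s'. big_step (While b c) s ((n - k) * Suc t + 1) s' \<and> I n s'"
proof (induction "n - k" arbitrary: k s)
  case 0
  then have "k = n" by simp
  then show ?case using big_step.WhileF[OF stop] 0 by auto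
next
  case (Suc j)
  then have "k < n" by simp
  then obtain s1 where "bval b s" "big_step c s t s1" "I (Suc k) s1"
    using step Suc.prems(2) by blast
  moreover have "j = n - Suc k" using Suc.hyps(2) by arith
  then obtain s' where "big_step (While b c) s1 ((n - Suc k) * Suc t + 1) s'" "I n s'"
    using Suc.hyps(1)[OF _ Suc_leI[OF \<open>k < n\<close>] \<open>I (Suc k) s1\<close>] by blast
  moreover have "Suc (t + ((n - Suc k) * Suc t + 1)) = (n - k) * Suc t + 1"
    by (simp only: Suc_diff_Suc[OF \<open>k < n\<close>, symmetric] mult_Suc)
  ultimately show ?case using big_step.WhileT by metis
qed

text \<open>The three flag updates are the blocks tests for k - 1, k and k + 1 off blocks; their
  bounds arise from cells 11 and 12 by subtracting or adding uo and max lo 1 (cells 5 and 15).\<close>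
definition loop_body :: com where
  "loop_body =
    Seq (set_flag_if (fits_bexp (Minus (cell 12) (cell 15)) (Minus (cell 11) (cell 5))))
    (Seq (set_flag_if (fits_bexp (cell 12) (cell 11)))
    (Seq (set_flag_if (fits_bexp (Plus (cell 12) (cell 15)) (Plus (cell 11) (cell 5))))
    (Seq (Store (Const 9) (Plus (cell 9) (cell 14)))
    (Seq (Store (Const 10) (Plus (cell 10) (cell 3)))
    (Seq (Store (Const 11) (Plus (cell 11) (cell 5)))
    (Seq (Store (Const 12) (Plus (cell 12) (cell 15)))
    (Store (Const 8) (Plus (cell 8) (Const 1)))))))))"

definition loop_inv :: "nat \<Rightarrow> nat \<Rightarrow> nat \<Rightarrow> nat \<Rightarrow> nat \<Rightarrow> nat \<Rightarrow> nat \<Rightarrow> nat \<Rightarrow> state \<Rightarrow> bool" where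
  "loop_inv D lw uw lo uo Uw Uo k s \<longleftrightarrow>
     s 0 = D \<and> s 3 = uw \<and> s 5 = uo \<and> s 6 = Uw \<and> s 7 = Uo \<and>
     s 8 = k \<and> s 9 = k * max lw 1 \<and> s 10 = k * uw \<and> s 11 = k * uo \<and> s 12 = k * max lo 1 \<and>
     s 13 = (if \<exists>j<k. block_count_test D lw uw lo uo Uw Uo j then 1 else 0) \<and>
     s 14 = max lw 1 \<and> s 15 = max lo 1"

lemma loop_body_step:
  assumes "loop_inv D lw uw lo uo Uw Uo k s"
  shows "\<exists>s'. big_step loop_body s 11 s' \<and> loop_inv D lw uw lo uo Uw Uo (Suc k) s'"
proof -
  let ?test = "\<lambda>X Y. work_total_feasible D (k * max lw 1) (k * uw) X Y Uw Uo"
  have flag: "(\<exists>j<Suc k. block_count_test D lw uw lo uo Uw Uo j) \<longleftrightarrow>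
      (\<exists>j<k. block_count_test D lw uw lo uo Uw Uo j) \<or>
      ?test (k * max lo 1 - max lo 1) (k * uo - uo) \<or> ?test (k * max lo 1) (k * uo) \<or>
      ?test (k * max lo 1 + max lo 1) (k * uo + uo)"
    by (auto simp: less_Suc_eq block_count_test_def blocks_test_def diff_mult_distrib add.commute)
  have "\<exists>t s'. big_step loop_body s t s' \<and> t = 11 \<and> loop_inv D lw uw lo uo Uw Uo (Suc k) s'"
    unfolding loop_body_def
    apply (intro exI conjI)
      apply (rule big_step.Seq big_step_set_flag_if big_step_Store_Const)+
    using assms
     apply (simp_all add: loop_inv_def flag)
    done
  then show ?thesis by blast
qed

definition loop_init :: com where
  "loop_init =
    Seq (Store (Const 8) (Const 0)) (Seq (Store (Const 9) (Const 0)) (Seq (Store (Const 10) (Const 0))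
    (Seq (Store (Const 11) (Const 0)) (Seq (Store (Const 12) (Const 0)) (Seq (Store (Const 13) (Const 0))
    (Seq (max1_store 2 14) (max1_store 4 15)))))))"

lemma loop_init_step:
  assumes "s0 0 = D" "s0 2 = lw" "s0 3 = uw" "s0 4 = lo" "s0 5 = uo" "s0 6 = Uw" "s0 7 = Uo"
  shows "\<exists>s. big_step loop_init s0 10 s \<and> loop_inv D lw uw lo uo Uw Uo 0 s"
proof -
  have "\<exists>t s. big_step loop_init s0 t s \<and> t = 10 \<and> loop_inv D lw uw lo uo Uw Uo 0 s"
    unfolding loop_init_def
    apply (intro exI conjI)
      apply (rule big_step.Seq big_step_max1_store big_step_Store_Const)+
    using assms
     apply (simp_all add: loop_inv_def)
    done
  then show ?thesis by blast
qed

definition decider :: com where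
  "decider = Seq loop_init (Seq (While (Less (cell 8) (Plus (cell 0) (Const 1))) loop_body)
    (Store (Const 0) (cell 13)))"

lemma decider_step:
  assumes "s0 0 = D" "s0 2 = lw" "s0 3 = uw" "s0 4 = lo" "s0 5 = uo" "s0 6 = Uw" "s0 7 = Uo"
  shows "\<exists>s. big_step decider s0 (12 * D + 24) s \<and>
    (s 0 = 1 \<longleftrightarrow> (\<exists>k\<le>D. block_count_test D lw uw lo uo Uw Uo k))"
proof -
  let ?guard = "Less (cell 8) (Plus (cell 0) (Const 1))"
  let ?inv = "loop_inv D lw uw lo uo Uw Uo"
  have guard: "bval ?guard s \<longleftrightarrow> k < Suc D" if "?inv k s" for k s
    using that by (simp add: loop_inv_def)
  have step: "bval ?guard s \<and> (\<exists>s'. big_step loop_body s 11 s' \<and> ?inv (Suc k) s')"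
    if "k < Suc D" "?inv k s" for k s
    using guard[OF that(2)] loop_body_step[OF that(2)] that(1) by blast
  have stop: "\<not> bval ?guard s" if "?inv (Suc D) s" for s
    using guard[OF that] by simp
  obtain s1 where s1: "big_step loop_init s0 10 s1" "?inv 0 s1"
    using loop_init_step[OF assms] by blast
  obtain s2 where s2: "big_step (While ?guard loop_body) s1 ((Suc D - 0) * Suc 11 + 1) s2"
    "?inv (Suc D) s2"
    using big_step_While_counting[where I = ?inv, OF step stop zero_le s1(2)] by blast
  have "big_step decider s0 (10 + ((Suc D - 0) * Suc 11 + 1 + 1)) (s2(0 := aval (cell 13) s2))"
    unfolding decider_def by (rule big_step.Seq[OF s1(1) big_step.Seq[OF s2(1) big_step_Store_Const]])
  moreover have "s2 13 = 1 \<longleftrightarrow> (\<exists>k\<le>D. block_count_test D lw uw lo uo Uw Uo k)"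
    using s2(2) by (simp add: loop_inv_def less_Suc_eq_le)
  ultimately show ?thesis by (auto simp: algebra_simps)
qed

theorem lemma3p1:
  shows "\<exists>(P::com) (c::nat) (k::nat).
    \<forall>D N lw uw lo uo Uw Uo (rl::nat \<Rightarrow> nat) (ru::nat \<Rightarrow> nat).
      D \<ge> 1 \<longrightarrow> N \<ge> 1 \<longrightarrow> (\<forall>d\<in>{1..D}. rl d = 0 \<and> ru d = N) \<longrightarrow>
      (\<exists>t s'. big_step P (input_state D N lw uw lo uo Uw Uo rl ru) t s' \<and>
              t \<le> c * D ^ k \<and>
              (s' 0 = 1 \<longleftrightarrow> dodosp_yes D N lw uw lo uo Uw Uo rl ru))"
proof (rule exI[of _ decider], rule exI[of _ 36], rule exI[of _ 1], intro allI impI)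
  fix D N lw uw lo uo Uw Uo and rl ru :: "nat \<Rightarrow> nat"
  assume D: "D \<ge> 1" and N: "N \<ge> 1" and demand: "\<forall>d\<in>{1..D}. rl d = 0 \<and> ru d = N"
  let ?s0 = "input_state D N lw uw lo uo Uw Uo rl ru"
  have "?s0 0 = D" "?s0 2 = lw" "?s0 3 = uw" "?s0 4 = lo" "?s0 5 = uo" "?s0 6 = Uw" "?s0 7 = Uo"
    by (simp_all add: input_state_def)
  then obtain s where "big_step decider ?s0 (12 * D + 24) s"
    and "s 0 = 1 \<longleftrightarrow> (\<exists>k\<le>D. block_count_test D lw uw lo uo Uw Uo k)"
    using decider_step by blast
  moreover have "12 * D + 24 \<le> 36 * D ^ 1" using D by simp
  ultimately show "\<exists>t s'. big_step decider ?s0 t s' \<and> t \<le> 36 * D ^ 1 \<and>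
      (s' 0 = 1 \<longleftrightarrow> dodosp_yes D N lw uw lo uo Uw Uo rl ru)"
    using dodosp_yes_iff_block_count_test[OF D N demand] by blast
qed

end
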